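(* Let $F:\mathcal{H}\to\mathbb{R}$ be differentiable with $L$-Lipschitz gradient, $\arg\min F\ne\emptyset$, satisfying (PL) with $\mu>0$, and let $x(\cdot)$ be the solution of the heavy ball system with damping $\alpha>0$ and initial point $x_0$. Let $a,\delta\ge0$ and set $R:=\alpha-a+\delta$. Assume $$R>0,\qquad aR\le 2\mu,\qquad L-\alpha\delta+\frac{\delta}{2}R\le 0.$$ Then the function $V$ defined below satisfies $V(t)\le a(F(x_0)-F_* )e^{-Rt}$ for all $t\ge0$.
   Context: (PL) with constant $\mu>0$: $F(x)-F_*\le \frac{1}{2\mu}\|\nabla F(x)\|^2$ for all $x$, where $F_*=\min F$. Heavy ball system: $\ddot x(t)+\alpha\dot x(t)+\nabla F(x(t))=0$, $x(0)=x_0$, $\dot x(0)=0$ (unique $C^2$ global solution). For parameters $a,\delta$: $W(t)=F(x(t))-F_*$ and $V(t)=aW(t)+\langle\nabla F(x(t)),\dot x(t)\rangle+\frac\delta2\|\dot x(t)\|^2$. *)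

theory Defs
  imports "HOL-Analysis.Analysis"
begin

end

theory Submission
  imports Defs
begin

text \<open>Since the gradient is only Lipschitz, \<open>t \<mapsto> \<nabla>F(x t) \<bullet> x' t\<close> need not be differentiable.
  We therefore control the upper right Dini derivative of \<open>U t = e\<^sup>R\<^sup>t V t\<close>: freezing the
  gradient at its value at \<open>t\<close> gives a differentiable function whose derivative, computed with the
  heavy ball equation and estimated with (PL) and the two conditions on \<open>a, \<delta>\<close>, is at most
  \<open>-L e\<^sup>R\<^sup>t \<parallel>x' t\<parallel>\<^sup>2\<close>, while the error made by freezing is at most
  \<open>L e\<^sup>R\<^sup>s \<parallel>x s - x t\<parallel> \<parallel>x' s\<parallel>\<close>, whose right derivative at \<open>t\<close> is
  \<open>L e\<^sup>R\<^sup>t \<parallel>x' t\<parallel>\<^sup>2\<close>. So the Dini derivative of \<open>U\<close> is nonpositive and \<open>U\<close> is nonincreasing.\<close>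

lemma has_vector_derivative_iff_quotient:
  fixes f :: "real \<Rightarrow> 'a::real_normed_vector"
  shows "(f has_vector_derivative D) (at x within S) \<longleftrightarrow>
    ((\<lambda>y. (f y - f x) /\<^sub>R (y - x)) \<longlongrightarrow> D) (at x within S)"
proof -
  have "norm (f y - f x - (y - x) *\<^sub>R D) / norm (y - x) = norm ((f y - f x) /\<^sub>R (y - x) - D)"
    if "y \<noteq> x" for y
  proof -
    have "(f y - f x) /\<^sub>R (y - x) - D = (f y - f x - (y - x) *\<^sub>R D) /\<^sub>R (y - x)"
      using that by (simp add: scaleR_diff_right)
    then show ?thesis by (simp add: divide_inverse)
  qed
  then have "((\<lambda>y. norm (f y - f x - (y - x) *\<^sub>R D) / norm (y - x)) \<longlongrightarrow> 0) (at x within S)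
      \<longleftrightarrow> ((\<lambda>y. (f y - f x) /\<^sub>R (y - x) - D) \<longlongrightarrow> 0) (at x within S)"
    by (subst tendsto_norm_zero_iff[symmetric]) (rule Lim_cong_within, auto)
  then show ?thesis
    by (simp add: has_vector_derivative_def has_derivative_iff_norm bounded_linear_scaleR_left
        LIM_zero_iff)
qed

lemma le_of_right_dini_nonpos:
  fixes \<phi> :: "real \<Rightarrow> real"
  assumes cont: "continuous_on {a..b} \<phi>" and "a \<le> b"
    and dini: "\<And>t e. t \<in> {a..<b} \<Longrightarrow> e > 0 \<Longrightarrow>
      eventually (\<lambda>s. \<phi> s - \<phi> t \<le> e * (s - t)) (at_right t)"
  shows "\<phi> b \<le> \<phi> a"
proof (rule field_le_epsilon)
  fix e :: real assume "e > 0"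
  define e' where "e' = e / (b - a + 1)"
  have "e' > 0" using \<open>e > 0\<close> \<open>a \<le> b\<close> by (simp add: e'_def)
  define S where "S = {t \<in> {a..b}. \<phi> t - e' * (t - a) \<le> \<phi> a}"
  have "closed S"
    unfolding S_def by (rule continuous_on_closed_Collect_le) (auto intro!: continuous_intros cont)
  moreover have "bounded S" by (rule bounded_subset[of "{a..b}"]) (auto simp: S_def)
  ultimately have "compact S" by (simp add: compact_eq_bounded_closed)
  moreover have "a \<in> S" using \<open>a \<le> b\<close> by (simp add: S_def)
  ultimately obtain s where s: "s \<in> S" "\<forall>r \<in> S. r \<le> s"
    using compact_attains_sup by blast
  \<comment> \<open>the largest point of \<open>S\<close> cannot lie below \<open>b\<close>, since the Dini bound lets \<open>S\<close> continue to its right\<close>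
  have "s = b"
  proof (rule ccontr)
    assume "s \<noteq> b"
    with s(1) have "s \<in> {a..<b}" by (auto simp: S_def)
    then have "eventually (\<lambda>r. \<phi> r - \<phi> s \<le> e' * (r - s) \<and> r \<in> {s<..<b}) (at_right s)"
      using dini[of s e'] \<open>e' > 0\<close> eventually_at_right_real[of s b] by (simp add: eventually_conj)
    then obtain r where r: "\<phi> r - \<phi> s \<le> e' * (r - s)" "r \<in> {s<..<b}"
      using eventually_happens'[of "at_right s"] by auto
    with s(1) have "r \<in> S" by (auto simp: S_def algebra_simps)
    with s(2) have "r \<le> s" by blast
    with r(2) show False by simp
  qed
  with s(1) have "\<phi> b \<le> \<phi> a + e' * (b - a)" by (simp add: S_def)
  also have "e' * (b - a) \<le> e" using \<open>e > 0\<close> \<open>a \<le> b\<close> by (simp add: e'_def field_simps)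
  finally show "\<phi> b \<le> \<phi> a + e" by simp
qed

lemma right_dini_le_of_quotient_bound:
  fixes \<phi> q :: "real \<Rightarrow> real"
  assumes bound: "eventually (\<lambda>s. \<phi> s - \<phi> t \<le> (s - t) * q s) (at_right t)"
    and lim: "(q \<longlongrightarrow> l) (at_right t)" and "l \<le> 0" and "e > 0"
  shows "eventually (\<lambda>s. \<phi> s - \<phi> t \<le> e * (s - t)) (at_right t)"
proof -
  have "eventually (\<lambda>s. q s < e) (at_right t)"
    using order_tendstoD(2)[OF lim] \<open>l \<le> 0\<close> \<open>e > 0\<close> by auto
  moreover have "eventually (\<lambda>s. s > t) (at_right t)" by (rule eventually_at_right_less)
  ultimately show ?thesis using bound
  proof eventually_elim
    case (elim s)
    then have "(s - t) * q s \<le> (s - t) * e" by (intro mult_left_mono) auto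
    with elim(3) show ?case by (simp add: mult.commute)
  qed
qed

lemma heavy_ball_energy_rate_nonpos:
  fixes g v w :: "'a::real_inner"
  assumes "0 \<le> W" and PL: "2 * \<mu> * W \<le> g \<bullet> g" and ode: "w = - (\<alpha> *\<^sub>R v) - g"
    and cond1: "a * (\<alpha> - a + \<delta>) \<le> 2 * \<mu>"
    and cond2: "L - \<alpha> * \<delta> + \<delta> / 2 * (\<alpha> - a + \<delta>) \<le> 0"
  shows "(\<alpha> - a + \<delta>) * (a * W + g \<bullet> v + \<delta> / 2 * (v \<bullet> v))
      + (a * (g \<bullet> v) + g \<bullet> w + \<delta> * (v \<bullet> w)) + L * (v \<bullet> v) \<le> 0"
proof -
  have "(\<alpha> - a + \<delta>) * a * W \<le> 2 * \<mu> * W"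
    using cond1 \<open>0 \<le> W\<close> by (intro mult_right_mono) (auto simp: algebra_simps)
  moreover have "(L - \<alpha> * \<delta> + \<delta> / 2 * (\<alpha> - a + \<delta>)) * (v \<bullet> v) \<le> 0"
    using cond2 by (intro mult_nonpos_nonneg) auto
  moreover have gw: "g \<bullet> w = - \<alpha> * (g \<bullet> v) - g \<bullet> g" and vw: "v \<bullet> w = - \<alpha> * (v \<bullet> v) - g \<bullet> v"
    by (simp_all add: ode inner_diff_right inner_commute)
  have "(\<alpha> - a + \<delta>) * (a * W + g \<bullet> v + \<delta> / 2 * (v \<bullet> v))
      + (a * (g \<bullet> v) + g \<bullet> w + \<delta> * (v \<bullet> w)) + L * (v \<bullet> v)
      = (\<alpha> - a + \<delta>) * a * W - g \<bullet> g + (L - \<alpha> * \<delta> + \<delta> / 2 * (\<alpha> - a + \<delta>)) * (v \<bullet> v)"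
    unfolding gw vw by (simp add: algebra_simps)
  ultimately show ?thesis
    using PL by linarith
qed

locale heavy_ball_PL =
  fixes F :: "'h::real_inner \<Rightarrow> real"
    and gradF :: "'h \<Rightarrow> 'h"
    and L \<mu> \<alpha> :: real
    and x x' x'' :: "real \<Rightarrow> 'h"
  assumes grad: "\<And>y. (F has_derivative (\<lambda>h. gradF y \<bullet> h)) (at y)"
    and lip: "L-lipschitz_on UNIV gradF"
    and argmin_ne: "\<exists>z. \<forall>y. F z \<le> F y"
    and mu_pos: "\<mu> > 0"
    and PL: "\<And>y. F y - (INF z. F z) \<le> 1 / (2 * \<mu>) * (norm (gradF y))\<^sup>2"
    and dx: "\<And>t. t \<ge> 0 \<Longrightarrow> (x has_vector_derivative x' t) (at t within {0..})"
    and ddx: "\<And>t. t \<ge> 0 \<Longrightarrow> (x' has_vector_derivative x'' t) (at t within {0..})"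
    and ode: "\<And>t. t \<ge> 0 \<Longrightarrow> x'' t + \<alpha> *\<^sub>R x' t + gradF (x t) = 0"
begin

definition Fmin :: real where "Fmin = (INF z. F z)"

text \<open>The function \<open>V\<close> with the gradient slot frozen at \<open>g\<close>; the paper's \<open>V t\<close> is
  \<open>lyapunov a \<delta> (gradF (x t)) t\<close>.\<close>
definition lyapunov :: "real \<Rightarrow> real \<Rightarrow> 'h \<Rightarrow> real \<Rightarrow> real" where
  "lyapunov a \<delta> g t = a * (F (x t) - Fmin) + g \<bullet> x' t + \<delta> / 2 * (x' t \<bullet> x' t)"

lemma Fmin_le: "Fmin \<le> F y"
proof -
  have "bdd_below (range F)" using argmin_ne by (auto intro: bdd_belowI2)
  then show ?thesis unfolding Fmin_def by (rule cINF_lower) simp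
qed

lemma PL_inner: "2 * \<mu> * (F y - Fmin) \<le> gradF y \<bullet> gradF y"
  using PL[of y] mu_pos by (simp add: Fmin_def field_simps power2_norm_eq_inner)

lemma continuous_on_trajectory: "continuous_on {0..} x" "continuous_on {0..} x'"
  using dx ddx by (auto intro!: has_derivative_continuous_on simp: has_vector_derivative_def)

lemma continuous_on_lyapunov: "continuous_on {0..} (\<lambda>t. lyapunov a \<delta> (gradF (x t)) t)"
proof -
  have "continuous_on UNIV F"
    using grad has_derivative_continuous by (blast intro: continuous_at_imp_continuous_on)
  moreover have "continuous_on UNIV gradF" using lip by (rule lipschitz_on_continuous_on)
  ultimately show ?thesis
    unfolding lyapunov_def using continuous_on_trajectory
    by (auto intro!: continuous_intros elim: continuous_on_compose2)
qed

lemma frozen_lyapunov_has_derivative: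
  assumes "t \<ge> 0"
  shows "((\<lambda>s. exp (R * s) * lyapunov a \<delta> g s) has_field_derivative
      exp (R * t) * (R * lyapunov a \<delta> g t
        + (a * (gradF (x t) \<bullet> x' t) + g \<bullet> x'' t + \<delta> * (x' t \<bullet> x'' t)))) (at t within {0..})"
proof -
  have hx: "(x has_derivative (\<lambda>h. h *\<^sub>R x' t)) (at t within {0..})"
    and hx': "(x' has_derivative (\<lambda>h. h *\<^sub>R x'' t)) (at t within {0..})"
    using dx[OF assms] ddx[OF assms] by (simp_all add: has_vector_derivative_def)
  have hF: "((\<lambda>s. F (x s)) has_field_derivative gradF (x t) \<bullet> x' t) (at t within {0..})"
    using has_derivative_compose[OF hx grad] by (simp add: has_field_derivative_def mult_commute_abs)
  have hg: "((\<lambda>s. g \<bullet> x' s) has_field_derivative g \<bullet> x'' t) (at t within {0..})"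
    using has_derivative_inner_right[OF hx'] by (simp add: has_field_derivative_def mult_commute_abs)
  have hvv: "((\<lambda>s. x' s \<bullet> x' s) has_field_derivative 2 * (x' t \<bullet> x'' t)) (at t within {0..})"
    using has_derivative_inner[OF hx' hx']
    by (simp add: has_field_derivative_def inner_commute algebra_simps mult_commute_abs)
  show ?thesis
    unfolding lyapunov_def
    by (rule derivative_eq_intros hF hg hvv | simp)+ (simp add: algebra_simps)
qed

lemma lyapunov_unfreeze_le:
  "lyapunov a \<delta> (gradF (x s)) s - lyapunov a \<delta> (gradF y) s \<le> L * norm (x s - y) * norm (x' s)"
proof -
  have "lyapunov a \<delta> (gradF (x s)) s - lyapunov a \<delta> (gradF y) s = (gradF (x s) - gradF y) \<bullet> x' s"
    by (simp add: lyapunov_def inner_diff_left)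
  also have "\<dots> \<le> norm (gradF (x s) - gradF y) * norm (x' s)"
    by (rule norm_cauchy_schwarz)
  also have "\<dots> \<le> L * norm (x s - y) * norm (x' s)"
    using lipschitz_on_normD[OF lip] by (intro mult_right_mono) auto
  finally show ?thesis .
qed

lemma lyapunov_rate_nonpos:
  assumes "a * R \<le> 2 * \<mu>" and "L - \<alpha> * \<delta> + \<delta> / 2 * R \<le> 0"
    and R: "R = \<alpha> - a + \<delta>" and "t \<ge> 0"
  shows "R * lyapunov a \<delta> (gradF (x t)) t + (a * (gradF (x t) \<bullet> x' t) + gradF (x t) \<bullet> x'' t
      + \<delta> * (x' t \<bullet> x'' t)) + L * (x' t \<bullet> x' t) \<le> 0"
proof -
  have "x'' t = - (\<alpha> *\<^sub>R x' t) - gradF (x t)"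
    using ode[OF \<open>t \<ge> 0\<close>] by (simp add: algebra_simps eq_neg_iff_add_eq_0)
  with Fmin_le PL_inner assms(1,2) show ?thesis
    unfolding lyapunov_def R by (intro heavy_ball_energy_rate_nonpos[where \<mu> = \<mu>]) auto
qed

lemma right_dini_exp_lyapunov_nonpos:
  assumes "a * R \<le> 2 * \<mu>" and "L - \<alpha> * \<delta> + \<delta> / 2 * R \<le> 0"
    and "R = \<alpha> - a + \<delta>" and "t \<ge> 0" and "e > 0"
  shows "eventually (\<lambda>s. exp (R * s) * lyapunov a \<delta> (gradF (x s)) s
      - exp (R * t) * lyapunov a \<delta> (gradF (x t)) t \<le> e * (s - t)) (at_right t)"
proof -
  define g where "g = gradF (x t)"
  define v where "v = x' t"
  define Ug where "Ug s = exp (R * s) * lyapunov a \<delta> g s" for s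
  define D where "D = exp (R * t) * (R * lyapunov a \<delta> g t
    + (a * (g \<bullet> v) + g \<bullet> x'' t + \<delta> * (v \<bullet> x'' t)))"
  define q where "q s = (Ug s - Ug t) / (s - t)
    + exp (R * s) * L * norm ((x s - x t) /\<^sub>R (s - t)) * norm (x' s)" for s
  have "((\<lambda>s. (Ug s - Ug t) / (s - t)) \<longlongrightarrow> D) (at_right t)"
    using frozen_lyapunov_has_derivative[OF \<open>t \<ge> 0\<close>, of R a \<delta> g]
    unfolding has_field_derivative_iff Ug_def D_def g_def v_def
    by (rule tendsto_within_subset) (use \<open>t \<ge> 0\<close> in auto)
  moreover have "((\<lambda>s. (x s - x t) /\<^sub>R (s - t)) \<longlongrightarrow> v) (at_right t)"
    using dx[OF \<open>t \<ge> 0\<close>] unfolding has_vector_derivative_iff_quotient v_def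
    by (rule tendsto_within_subset) (use \<open>t \<ge> 0\<close> in auto)
  moreover have "(x' \<longlongrightarrow> v) (at_right t)"
    using continuous_on_trajectory(2) \<open>t \<ge> 0\<close> unfolding v_def continuous_on_def
    by (auto intro: tendsto_within_subset)
  ultimately have lim: "(q \<longlongrightarrow> D + exp (R * t) * L * norm v * norm v) (at_right t)"
    unfolding q_def by (intro tendsto_intros)
  have "D + exp (R * t) * L * norm v * norm v = exp (R * t) * (R * lyapunov a \<delta> g t
      + (a * (g \<bullet> v) + g \<bullet> x'' t + \<delta> * (v \<bullet> x'' t)) + L * (v \<bullet> v))"
    by (simp add: D_def algebra_simps power2_norm_eq_inner[symmetric] power2_eq_square)
  also have "\<dots> \<le> 0"
    using lyapunov_rate_nonpos[OF assms(1-4)] by (simp add: g_def v_def mult_nonneg_nonpos)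
  finally have "D + exp (R * t) * L * norm v * norm v \<le> 0" .
  moreover have "eventually (\<lambda>s. exp (R * s) * lyapunov a \<delta> (gradF (x s)) s
      - exp (R * t) * lyapunov a \<delta> (gradF (x t)) t \<le> (s - t) * q s) (at_right t)"
    using eventually_at_right_less
  proof eventually_elim
    case (elim s)
    have "lyapunov a \<delta> (gradF (x s)) s - lyapunov a \<delta> g s \<le> L * norm (x s - x t) * norm (x' s)"
      unfolding g_def by (rule lyapunov_unfreeze_le)
    also have "norm (x s - x t) = (s - t) * norm ((x s - x t) /\<^sub>R (s - t))"
      using elim by simp
    finally have "exp (R * s) * (lyapunov a \<delta> (gradF (x s)) s - lyapunov a \<delta> g s)
        \<le> exp (R * s) * (L * ((s - t) * norm ((x s - x t) /\<^sub>R (s - t))) * norm (x' s))"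
      by (intro mult_left_mono) auto
    moreover have "Ug s - Ug t = (s - t) * ((Ug s - Ug t) / (s - t))" using elim by simp
    ultimately show ?case by (simp add: q_def Ug_def g_def algebra_simps)
  qed
  ultimately show ?thesis
    using lim \<open>e > 0\<close> by (intro right_dini_le_of_quotient_bound)
qed

lemma exp_lyapunov_le_initial:
  assumes "a * R \<le> 2 * \<mu>" "L - \<alpha> * \<delta> + \<delta> / 2 * R \<le> 0" "R = \<alpha> - a + \<delta>" "T \<ge> 0"
  shows "exp (R * T) * lyapunov a \<delta> (gradF (x T)) T \<le> lyapunov a \<delta> (gradF (x 0)) 0"
proof -
  have "continuous_on {0..T} (\<lambda>t. exp (R * t) * lyapunov a \<delta> (gradF (x t)) t)"
    using continuous_on_subset[OF continuous_on_lyapunov] by (intro continuous_intros) auto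
  with \<open>T \<ge> 0\<close> show ?thesis
    using right_dini_exp_lyapunov_nonpos[OF assms(1-3)]
    by (intro le_of_right_dini_nonpos[of 0 T "\<lambda>t. exp (R * t) * lyapunov a \<delta> (gradF (x t)) t",
        simplified]) auto
qed

end

theorem lemma6p1:
  fixes F :: "'h::{real_inner, complete_space} \<Rightarrow> real"
    and gradF :: "'h \<Rightarrow> 'h"
    and x x' x'' :: "real \<Rightarrow> 'h"
    and x0 :: 'h
    and L \<mu> \<alpha> a \<delta> :: real
  assumes grad: "\<And>y. (F has_derivative (\<lambda>h. gradF y \<bullet> h)) (at y)"
    and lip: "L-lipschitz_on UNIV gradF"
    and argmin_ne: "\<exists>z. \<forall>y. F z \<le> F y"
    and mu_pos: "\<mu> > 0"
    and PL: "\<And>y. F y - (INF z. F z) \<le> 1 / (2 * \<mu>) * (norm (gradF y))\<^sup>2"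
    and alpha_pos: "\<alpha> > 0"
    and dx: "\<And>t. t \<ge> 0 \<Longrightarrow> (x has_vector_derivative x' t) (at t within {0..})"
    and ddx: "\<And>t. t \<ge> 0 \<Longrightarrow> (x' has_vector_derivative x'' t) (at t within {0..})"
    and ddx_cont: "continuous_on {0..} x''"
    and ode: "\<And>t. t \<ge> 0 \<Longrightarrow> x'' t + \<alpha> *\<^sub>R x' t + gradF (x t) = 0"
    and init_pos: "x 0 = x0"
    and init_vel: "x' 0 = 0"
    and a_nonneg: "a \<ge> 0"
    and delta_nonneg: "\<delta> \<ge> 0"
    and R_pos: "\<alpha> - a + \<delta> > 0"
    and cond1: "a * (\<alpha> - a + \<delta>) \<le> 2 * \<mu>"
    and cond2: "L - \<alpha> * \<delta> + \<delta> / 2 * (\<alpha> - a + \<delta>) \<le> 0"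
  shows "\<forall>t \<ge> 0.
           a * (F (x t) - (INF z. F z)) + gradF (x t) \<bullet> x' t + \<delta> / 2 * (norm (x' t))\<^sup>2
             \<le> a * (F x0 - (INF z. F z)) * exp (- (\<alpha> - a + \<delta>) * t)"
proof (intro allI impI)
  fix t :: real assume "t \<ge> 0"
  interpret heavy_ball_PL F gradF L \<mu> \<alpha> x x' x''
    using grad lip argmin_ne mu_pos PL dx ddx ode by unfold_locales
  define R where "R = \<alpha> - a + \<delta>"
  have "lyapunov a \<delta> (gradF (x t)) t = exp (- R * t) * (exp (R * t) * lyapunov a \<delta> (gradF (x t)) t)"
    by (simp add: exp_minus field_simps)
  also have "\<dots> \<le> exp (- R * t) * lyapunov a \<delta> (gradF (x 0)) 0"
    using exp_lyapunov_le_initial[OF _ _ R_def \<open>t \<ge> 0\<close>] cond1 cond2 by (simp add: R_def)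
  finally show "a * (F (x t) - (INF z. F z)) + gradF (x t) \<bullet> x' t + \<delta> / 2 * (norm (x' t))\<^sup>2
      \<le> a * (F x0 - (INF z. F z)) * exp (- (\<alpha> - a + \<delta>) * t)"
    by (simp add: lyapunov_def Fmin_def init_pos init_vel R_def power2_norm_eq_inner mult.commute)
qed

end
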